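(* Let $N,T\ge1$, $\boldsymbol E\in\mathbb{C}^{N\times T}$, $H(x,\boldsymbol y)=\|\boldsymbol E-\boldsymbol a(x)\boldsymbol y^H\|_F^2$, and let $L:\mathbb C^T\to(0,\infty)$ be such that Assumption A holds. Let $\{\boldsymbol z^k\}=\{(x^k,\boldsymbol y^k)\}$ be generated by the cubic-regularized alternating scheme from $\boldsymbol z^0$, and assume this sequence is bounded. Let $\omega(\boldsymbol z^0)$ be the set of all $\bar{\boldsymbol z}\in\mathbb R\times\mathbb C^T$ for which there is an increasing sequence of integers $\{k_l\}$ with $\boldsymbol z^{k_l}\to\bar{\boldsymbol z}$. Then: (i) $\omega(\boldsymbol z^0)$ is nonempty and $\omega(\boldsymbol z^0)\subseteq\operatorname{crit}H:=\{\boldsymbol z:\nabla_{\boldsymbol z}H(\boldsymbol z)=0\}$; (ii) $\lim_{k\to\infty}\operatorname{dist}(\boldsymbol z^k,\omega(\boldsymbol z^0))=0$.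
   Context: Steering vector: $\boldsymbol a(x)=\frac{1}{\sqrt N}[1,e^{jx},\dots,e^{j(N-1)x}]^T$ for $x\in\mathbb R$. Cubic-regularized alternating scheme: given $H:\mathbb{R}\times\mathbb{C}^T\to\mathbb{R}$, a function $L:\mathbb{C}^T\to(0,\infty)$ and an initial point $(x^0,\boldsymbol y^0)$, for $k\ge0$ define $$\xi_k(x)=\partial_x H(x^k,\boldsymbol y^k)(x-x^k)+\tfrac12\,\partial^2_{xx}H(x^k,\boldsymbol y^k)(x-x^k)^2+\tfrac{L(\boldsymbol y^k)}{6}|x-x^k|^3,$$ $$x^{k+1}\in\arg\min_{x\in\mathbb R}\xi_k(x),\qquad \boldsymbol y^{k+1}\in\arg\min_{\boldsymbol y\in\mathbb{C}^T}H(x^{k+1},\boldsymbol y),$$ and write $\boldsymbol z^k=(x^k,\boldsymbol y^k)$. Assumption A: (i) $H$ is bounded below. (ii) For every fixed $\boldsymbol y$, $x\mapsto H(x,\boldsymbol y)$ is twice continuously differentiable with $|\partial^2_{xx}H(x_1,\boldsymbol y)-\partial^2_{xx}H(x_2,\boldsymbol y)|\le L(\boldsymbol y)|x_1-x_2|$. (iii) There is $\nu>0$ such that for every fixed $x$, $\boldsymbol y\mapsto H(x,\boldsymbol y)-\frac{\nu}{2}\|\boldsymbol y\|^2$ is convex on $\mathbb C^T\cong\mathbb R^{2T}$. (iv) There exist $0<\lambda^-\le\lambda^+$ with $\lambda^-\le L(\boldsymbol y^k)\le\lambda^+$ for all $k$. $\nabla_{\boldsymbol z}H=(\partial_xH,\nabla_{\boldsymbol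 y}H)$ with $\nabla_{\boldsymbol y}$ the Wirtinger gradient with respect to $\boldsymbol y$; $\operatorname{dist}(\boldsymbol z,S)=\inf_{\boldsymbol s\in S}\|\boldsymbol z-\boldsymbol s\|$. *)

theory Defs
  imports "HOL-Analysis.Analysis"
begin

definition steer :: "nat \<Rightarrow> nat \<Rightarrow> real \<Rightarrow> complex" where
  "steer N i x = exp (\<i> * of_nat i * complex_of_real x) / complex_of_real (sqrt (real N))"

text \<open>H(x,y) = ||E - a(x) y^H||_F^2; E is given by its rows E 0, ..., E (N-1) in C^T.\<close>
definition Hobj :: "nat \<Rightarrow> (nat \<Rightarrow> complex ^ 't) \<Rightarrow> real \<Rightarrow> complex ^ 't \<Rightarrow> real" where
  "Hobj N E x y = (\<Sum>i<N. \<Sum>t\<in>UNIV. (cmod (E i $ t - steer N i x * cnj (y $ t)))\<^sup>2)"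

text \<open>Wirtinger (conjugate) gradient of a real-valued function on C^T:
  component t is (1/2)(d f/d Re y_t + j d f/d Im y_t).\<close>
definition wirtinger_grad :: "(complex ^ 't \<Rightarrow> real) \<Rightarrow> complex ^ 't \<Rightarrow> complex ^ 't" where
  "wirtinger_grad f y = (\<chi> t. (1/2) *
      (complex_of_real (deriv (\<lambda>s. f (y + s *\<^sub>R axis t 1)) 0)
       + \<i> * complex_of_real (deriv (\<lambda>s. f (y + s *\<^sub>R axis t \<i>)) 0)))"

definition dx :: "(real \<Rightarrow> 'b \<Rightarrow> real) \<Rightarrow> real \<Rightarrow> 'b \<Rightarrow> real" where
  "dx H x y = deriv (\<lambda>u. H u y) x"

definition dxx :: "(real \<Rightarrow> 'b \<Rightarrow> real) \<Rightarrow> real \<Rightarrow> 'b \<Rightarrow> real" where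
  "dxx H x y = deriv (\<lambda>u. dx H u y) x"

definition crit :: "(real \<Rightarrow> complex ^ 't \<Rightarrow> real) \<Rightarrow> (real \<times> (complex ^ 't)) set" where
  "crit H = {(x, y). dx H x y = 0 \<and> wirtinger_grad (H x) y = 0}"

definition cubic_model :: "(real \<Rightarrow> 'b \<Rightarrow> real) \<Rightarrow> ('b \<Rightarrow> real) \<Rightarrow> real \<Rightarrow> 'b \<Rightarrow> real \<Rightarrow> real" where
  "cubic_model H L xk yk x = dx H xk yk * (x - xk) + 1/2 * dxx H xk yk * (x - xk)\<^sup>2
      + L yk / 6 * \<bar>x - xk\<bar> ^ 3"

definition omega_limit :: "(nat \<Rightarrow> 'a::topological_space) \<Rightarrow> 'a set" where
  "omega_limit z = {zb. \<exists>r. strict_mono r \<and> (z \<circ> r) \<longlonglongrightarrow> zb}"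

end

theory Submission
  imports Defs
begin

text \<open>Each x-step decreases H by at least (L/12)|x^{k+1}-x^k|^3, because the cubic model is an
  upper bound for H along x (Lipschitz Hessian) and its minimum value is at most -(L/12)|step|^3.
  Since H is bounded below, the steps tend to 0. At a limit point the stationarity equation of the
  cubic model then gives dx H = 0, and the exact y-minimisation passes to the limit, so the
  limit point minimises H in y and its Wirtinger gradient vanishes. Boundedness yields limit points
  and forces the distance to the set of limit points to tend to 0.\<close>

subsection \<open>Cubic models on the real line\<close>

lemma has_real_derivative_abs_cube:
  "((\<lambda>t::real. \<bar>t\<bar> ^ 3) has_real_derivative 3 * t * \<bar>t\<bar>) (at t)"
proof (cases "t = 0")
  case True
  have "((\<lambda>h::real. (\<bar>0 + h\<bar> ^ 3 - \<bar>0\<bar> ^ 3) / h) \<longlongrightarrow> 0) (at 0)"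
  proof (rule Lim_transform_within[where d = 1])
    show "((\<lambda>h::real. h * \<bar>h\<bar>) \<longlongrightarrow> 0) (at 0)"
      by (rule tendsto_eq_intros | simp)+
    show "h * \<bar>h\<bar> = (\<bar>0 + h\<bar> ^ 3 - \<bar>0\<bar> ^ 3) / h" if "0 < dist h 0" for h :: real
      using that by (simp add: power3_eq_cube abs_mult_self_eq)
  qed simp
  then show ?thesis using True by (simp add: DERIV_def)
next
  case False
  then consider "t > 0" | "t < 0" by linarith
  then show ?thesis
  proof cases
    case 1
    have "((\<lambda>t::real. t ^ 3) has_real_derivative 3 * t * \<bar>t\<bar>) (at t)"
      using 1 by (auto intro!: derivative_eq_intros simp: power2_eq_square)
    then show ?thesis
      by (rule has_field_derivative_transform_within_open[where S = "{0<..}"]) (use 1 in auto)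
  next
    case 2
    have "((\<lambda>t::real. - (t ^ 3)) has_real_derivative 3 * t * \<bar>t\<bar>) (at t)"
      using 2 by (auto intro!: derivative_eq_intros simp: power2_eq_square)
    then show ?thesis
      by (rule has_field_derivative_transform_within_open[where S = "{..<0}"]) (use 2 in auto)
  qed
qed

lemma cubic_argmin_stationary:
  fixes g M L x0 x1 :: real
  assumes min: "\<And>x. g * (x1 - x0) + 1/2 * M * (x1 - x0)\<^sup>2 + L/6 * \<bar>x1 - x0\<bar> ^ 3
                   \<le> g * (x - x0) + 1/2 * M * (x - x0)\<^sup>2 + L/6 * \<bar>x - x0\<bar> ^ 3"
  shows "g + M * (x1 - x0) + L/2 * (x1 - x0) * \<bar>x1 - x0\<bar> = 0"
proof (rule DERIV_local_min[where d = 1])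
  have cube: "((\<lambda>x. \<bar>x - x0\<bar> ^ 3)
      has_real_derivative 3 * (x1 - x0) * \<bar>x1 - x0\<bar> * 1) (at x1)"
    by (rule DERIV_chain2[OF has_real_derivative_abs_cube]) (auto intro!: derivative_eq_intros)
  have quadratic: "((\<lambda>x. g * (x - x0) + 1/2 * M * (x - x0)\<^sup>2)
      has_real_derivative g + M * (x1 - x0)) (at x1)"
    by (auto intro!: derivative_eq_intros simp: field_simps)
  show "((\<lambda>x. g * (x - x0) + 1/2 * M * (x - x0)\<^sup>2 + L/6 * \<bar>x - x0\<bar> ^ 3)
      has_real_derivative g + M * (x1 - x0) + L/2 * (x1 - x0) * \<bar>x1 - x0\<bar>) (at x1)"
    by (rule DERIV_cong[OF DERIV_add[OF quadratic DERIV_cmult[OF cube, of "L/6"]]]) (simp add: field_simps)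
qed (use min in auto)

lemma cubic_argmin_value_le:
  fixes g M L x0 x1 :: real
  assumes min: "\<And>x. g * (x1 - x0) + 1/2 * M * (x1 - x0)\<^sup>2 + L/6 * \<bar>x1 - x0\<bar> ^ 3
                   \<le> g * (x - x0) + 1/2 * M * (x - x0)\<^sup>2 + L/6 * \<bar>x - x0\<bar> ^ 3"
  shows "g * (x1 - x0) + 1/2 * M * (x1 - x0)\<^sup>2 + L/6 * \<bar>x1 - x0\<bar> ^ 3
    \<le> - L/12 * \<bar>x1 - x0\<bar> ^ 3"
proof -
  define h where "h = x1 - x0"
  have "g * h \<le> g * (- h)"
    using min[of "x0 - h"] by (simp add: h_def abs_minus_commute power2_commute)
  then have "g * h \<le> 0"
    by simp
  moreover have "h * (g + M * h + L/2 * h * \<bar>h\<bar>) = 0"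
    using cubic_argmin_stationary[OF min] by (simp add: h_def)
  then have "g * h + M * h\<^sup>2 + L/2 * \<bar>h\<bar> ^ 3 = 0"
    by (simp add: algebra_simps power2_eq_square power3_eq_cube abs_mult_self_eq)
  ultimately show ?thesis
    unfolding h_def[symmetric] by linarith
qed

text \<open>Integrating the Lipschitz bound on f'' twice, in the form of two monotonicity arguments.\<close>

lemma taylor_upper_bound_lipschitz_second_deriv:
  fixes f f' f'' :: "real \<Rightarrow> real"
  assumes f': "\<And>x. (f has_real_derivative f' x) (at x)"
    and f'': "\<And>x. (f' has_real_derivative f'' x) (at x)"
    and lip: "\<And>x. \<bar>f'' x - f'' x0\<bar> \<le> L * \<bar>x - x0\<bar>"
  shows "f x \<le> f x0 + f' x0 * (x - x0) + 1/2 * f'' x0 * (x - x0)\<^sup>2 + L/6 * \<bar>x - x0\<bar> ^ 3"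
proof (cases "x0 \<le> x")
  case True
  define Q where "Q t = L/2 * (t - x0)\<^sup>2 - (f' t - f' x0 - f'' x0 * (t - x0))" for t
  define P where "P t = L/6 * (t - x0) ^ 3 - (f t - f x0 - f' x0 * (t - x0) - 1/2 * f'' x0 * (t - x0)\<^sup>2)" for t
  have Q_deriv: "(Q has_real_derivative L * (t - x0) - (f'' t - f'' x0)) (at t)" for t
    unfolding Q_def by (auto intro!: derivative_eq_intros f'' simp: field_simps)
  have P_deriv: "(P has_real_derivative Q t) (at t)" for t
    unfolding P_def Q_def by (auto intro!: derivative_eq_intros f' simp: field_simps power2_eq_square)
  have lip_right: "f'' s - f'' x0 \<le> L * (s - x0)" if "x0 \<le> s" for s
    using lip[of s] that by (simp add: abs_le_iff)
  have "Q x0 \<le> Q t" if "x0 \<le> t" for t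
    by (rule deriv_nonneg_imp_mono[OF Q_deriv]) (use lip_right that in auto)
  then have "P x0 \<le> P x"
    by (intro deriv_nonneg_imp_mono[OF P_deriv] True) (auto simp: Q_def)
  then show ?thesis using True by (simp add: P_def)
next
  case False
  define Q where "Q t = f' t - f' x0 - f'' x0 * (t - x0) + L/2 * (t - x0)\<^sup>2" for t
  define P where "P t = - L/6 * (t - x0) ^ 3 - (f t - f x0 - f' x0 * (t - x0) - 1/2 * f'' x0 * (t - x0)\<^sup>2)" for t
  have Q_deriv: "(Q has_real_derivative (f'' t - f'' x0) + L * (t - x0)) (at t)" for t
    unfolding Q_def by (auto intro!: derivative_eq_intros f'' simp: field_simps)
  have P_deriv: "(P has_real_derivative - Q t) (at t)" for t
    unfolding P_def Q_def by (auto intro!: derivative_eq_intros f' simp: field_simps power2_eq_square)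
  have lip_left: "f'' s - f'' x0 \<le> L * (x0 - s)" if "s \<le> x0" for s
    using lip[of s] that by (simp add: abs_le_iff)
  have Q_nonneg: "0 \<le> Q t" if "t \<le> x0" for t
  proof -
    have "Q x0 \<le> Q t"
      by (rule deriv_nonpos_imp_antimono[OF Q_deriv]) (use lip_left that in \<open>force simp: algebra_simps\<close>)+
    then show ?thesis by (simp add: Q_def)
  qed
  have "P x0 \<le> P x"
    by (rule deriv_nonpos_imp_antimono[OF P_deriv]) (use Q_nonneg False in auto)
  moreover have "\<bar>x - x0\<bar> ^ 3 = - ((x - x0) ^ 3)"
    using False by (simp add: abs_if power3_eq_cube algebra_simps)
  ultimately show ?thesis by (simp add: P_def)
qed

lemma sufficient_decrease_tendsto_0:
  fixes F a :: "nat \<Rightarrow> real"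
  assumes descent: "\<And>k. F (Suc k) \<le> F k - c * a k"
    and a_nonneg: "\<And>k. 0 \<le> a k" and c_pos: "0 < c"
    and bdd: "bdd_below (range F)"
  shows "a \<longlonglongrightarrow> 0"
proof (rule tendsto_sandwich[OF always_eventually always_eventually tendsto_const])
  have a_le: "a k \<le> (F k - F (Suc k)) / c" for k
    using descent[of k] c_pos by (simp add: pos_le_divide_eq mult.commute)
  have "decseq F"
  proof (rule decseq_SucI)
    show "F (Suc k) \<le> F k" for k
      using descent[of k] mult_nonneg_nonneg[OF less_imp_le[OF c_pos] a_nonneg[of k]] by linarith
  qed
  moreover obtain B where "\<forall>k. B \<le> F k"
    using bdd by (auto simp: bdd_below_def)
  ultimately obtain l where l: "F \<longlonglongrightarrow> l"
    using decseq_convergent by blast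
  have "(\<lambda>k. (F k - F (Suc k)) / c) \<longlonglongrightarrow> (l - l) / c"
    by (rule tendsto_divide[OF tendsto_diff[OF l LIMSEQ_Suc[OF l]] tendsto_const]) (use c_pos in simp)
  then show "(\<lambda>k. (F k - F (Suc k)) / c) \<longlonglongrightarrow> 0"
    by simp
  show "\<forall>k. a k \<le> (F k - F (Suc k)) / c"
    using a_le by blast
qed (use a_nonneg in blast)

subsection \<open>The steering-vector objective\<close>

lemma steer_eq_Complex: "steer N i x = Complex (cos (i * x) / sqrt N) (sin (i * x) / sqrt N)"
proof -
  have "exp (\<i> * of_nat i * complex_of_real x) = cis (i * x)"
    by (simp add: cis_conv_exp mult.assoc)
  then show ?thesis
    unfolding steer_def by (simp add: complex_eq_iff Re_divide_of_real Im_divide_of_real)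
qed

lemma norm_diff_steer_cnj_power2:
  assumes "0 < N"
  shows "(cmod (e - steer N i x * cnj w))\<^sup>2
    = (cmod e)\<^sup>2 + (cmod w)\<^sup>2 / N - 2 / sqrt N * (Re (e * w) * cos (i * x) + Im (e * w) * sin (i * x))"
proof -
  obtain a b c d where e: "e = Complex a b" and w: "w = Complex c d"
    by (metis complex.exhaust_sel)
  define C S r where "C = cos (i * x)" and "S = sin (i * x)" and "r = sqrt (real N)"
  have r: "0 < r" "r\<^sup>2 = N"
    using assms by (simp_all add: r_def)
  have "(cmod (e - steer N i x * cnj w))\<^sup>2
      = (a - (C/r * c + S/r * d))\<^sup>2 + (b - (S/r * c - C/r * d))\<^sup>2"
    unfolding steer_eq_Complex e w cmod_power2 C_def S_def r_def by (simp add: algebra_simps)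
  also have "\<dots> = a\<^sup>2 + b\<^sup>2 + ((C*c + S*d)\<^sup>2 + (S*c - C*d)\<^sup>2) / r\<^sup>2
      - 2/r * ((a*c - b*d) * C + (a*d + b*c) * S)"
    using r(1) by (simp add: field_simps power2_eq_square)
  also have "(C*c + S*d)\<^sup>2 + (S*c - C*d)\<^sup>2 = (c\<^sup>2 + d\<^sup>2) * (S\<^sup>2 + C\<^sup>2)"
    by algebra
  finally show ?thesis
    using r unfolding e w cmod_power2 C_def S_def r_def by simp
qed

lemma Hobj_eq_trig_sum:
  "Hobj N E x y = (\<Sum>i<N. \<Sum>t\<in>UNIV. (cmod (E i $ t))\<^sup>2 + (cmod (y $ t))\<^sup>2 / N
      - 2 / sqrt N * (Re (E i $ t * y $ t) * cos (i * x) + Im (E i $ t * y $ t) * sin (i * x)))"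
  unfolding Hobj_def by (intro sum.cong refl) (simp add: norm_diff_steer_cnj_power2)

lemma has_real_derivative_trig_poly:
  "((\<lambda>x. R * cos (i * x) + I * sin (i * x))
    has_real_derivative i * (I * cos (i * x) - R * sin (i * x))) (at x)"
  by (auto intro!: derivative_eq_intros simp: algebra_simps)

lemma has_real_derivative_Hobj:
  "((\<lambda>u. Hobj N E u y) has_real_derivative
    (\<Sum>i<N. \<Sum>t\<in>UNIV. 2 / sqrt N *
      (i * (Re (E i $ t * y $ t) * sin (i * x) - Im (E i $ t * y $ t) * cos (i * x))))) (at x)"
  unfolding Hobj_eq_trig_sum
  by (intro DERIV_sum)
    (rule DERIV_cong[OF DERIV_diff[OF DERIV_const DERIV_cmult[OF has_real_derivative_trig_poly]]],
      simp add: algebra_simps)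

lemma dx_Hobj:
  "dx (Hobj N E) x y
    = (\<Sum>i<N. \<Sum>t\<in>UNIV. 2 / sqrt N *
        (i * (Re (E i $ t * y $ t) * sin (i * x) - Im (E i $ t * y $ t) * cos (i * x))))"
  unfolding dx_def by (rule DERIV_imp_deriv[OF has_real_derivative_Hobj])

lemma dxx_Hobj:
  "dxx (Hobj N E) x y
    = (\<Sum>i<N. \<Sum>t\<in>UNIV. 2 / sqrt N *
        (i * i * (Re (E i $ t * y $ t) * cos (i * x) + Im (E i $ t * y $ t) * sin (i * x))))"
  unfolding dxx_def dx_Hobj
  by (rule DERIV_imp_deriv, intro DERIV_sum DERIV_cmult)
    (auto intro!: derivative_eq_intros simp: algebra_simps)

lemma continuous_on_Hobj: "continuous_on UNIV (\<lambda>z. Hobj N E (fst z) (snd z))"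
  unfolding Hobj_eq_trig_sum by (intro continuous_intros) auto

lemma continuous_on_dx_Hobj: "continuous_on UNIV (\<lambda>z. dx (Hobj N E) (fst z) (snd z))"
  unfolding dx_Hobj by (intro continuous_intros)

lemma continuous_on_dxx_Hobj: "continuous_on UNIV (\<lambda>z. dxx (Hobj N E) (fst z) (snd z))"
  unfolding dxx_Hobj by (intro continuous_intros)

lemma Hobj_directionally_differentiable: "(\<lambda>s. Hobj N E x (y + s *\<^sub>R v)) differentiable at s0"
  unfolding Hobj_eq_trig_sum cmod_power2 by (simp add: algebra_simps)

subsection \<open>Limit points of bounded sequences\<close>

lemma omega_limit_nonempty:
  fixes z :: "nat \<Rightarrow> 'a::heine_borel"
  assumes "bounded (range z)"
  shows "omega_limit z \<noteq> {}"
  using bounded_imp_convergent_subsequence[OF assms] unfolding omega_limit_def by blast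

lemma infdist_omega_limit_tendsto_0:
  fixes z :: "nat \<Rightarrow> 'a::heine_borel"
  assumes bdd: "bounded (range z)"
  shows "(\<lambda>k. infdist (z k) (omega_limit z)) \<longlonglongrightarrow> 0"
proof (rule ccontr)
  assume not_lim: "\<not> (\<lambda>k. infdist (z k) (omega_limit z)) \<longlonglongrightarrow> 0"
  have "\<forall>l<0. \<forall>\<^sub>F k in sequentially. l < infdist (z k) (omega_limit z)"
    by (auto intro: always_eventually less_le_trans[OF _ infdist_nonneg])
  then obtain e where e: "0 < e"
    and "\<exists>\<^sub>F k in sequentially. \<not> infdist (z k) (omega_limit z) < e"
    using not_lim unfolding order_tendsto_iff by (auto simp: not_eventually)
  then have "infinite {k. e \<le> infdist (z k) (omega_limit z)}"
    unfolding frequently_sequentially infinite_nat_iff_unbounded_le by (auto simp: not_less)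
  then obtain r :: "nat \<Rightarrow> nat" where r: "strict_mono r" "\<And>n. e \<le> infdist (z (r n)) (omega_limit z)"
    using infinite_enumerate by blast
  have "bounded (range (z \<circ> r))"
    using bdd by (rule bounded_subset) auto
  then obtain l s where s: "strict_mono s" "(z \<circ> r \<circ> s) \<longlonglongrightarrow> l"
    using bounded_imp_convergent_subsequence by blast
  have l: "l \<in> omega_limit z"
    unfolding omega_limit_def using s strict_mono_o[OF r(1) s(1)] by (auto simp: o_assoc)
  obtain n where "dist (z (r (s n))) l < e"
    using s(2) e unfolding lim_sequentially by (metis comp_apply order_refl)
  moreover have "infdist (z (r (s n))) (omega_limit z) \<le> dist (z (r (s n))) l"
    using l by (rule infdist_le)
  ultimately show False
    using r(2)[of "s n"] by linarith
qed

lemma wirtinger_grad_eq_0_at_minimum: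
  fixes f :: "complex ^ 't \<Rightarrow> real"
  assumes min: "\<And>y. f y0 \<le> f y"
    and diff: "\<And>v. (\<lambda>s. f (y0 + s *\<^sub>R v)) differentiable at 0"
  shows "wirtinger_grad f y0 = 0"
proof -
  have "deriv (\<lambda>s. f (y0 + s *\<^sub>R v)) 0 = 0" for v
  proof -
    obtain D where D: "((\<lambda>s. f (y0 + s *\<^sub>R v)) has_real_derivative D) (at 0)"
      using diff[of v] real_differentiable_def by blast
    have "D = 0"
      by (rule DERIV_local_min[OF D, of 1]) (use min in auto)
    then show ?thesis
      using DERIV_imp_deriv[OF D] by simp
  qed
  then show ?thesis
    unfolding wirtinger_grad_def by (simp add: vec_eq_iff)
qed

subsection \<open>The cubic-regularized alternating scheme\<close>

lemma cubic_scheme_descent: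
  fixes H :: "real \<Rightarrow> 'b \<Rightarrow> real"
  assumes d1: "\<And>x. ((\<lambda>u. H u y) has_real_derivative dx H x y) (at x)"
    and d2: "\<And>x. ((\<lambda>u. dx H u y) has_real_derivative dxx H x y) (at x)"
    and lip: "\<And>x1 x2. \<bar>dxx H x1 y - dxx H x2 y\<bar> \<le> L y * \<bar>x1 - x2\<bar>"
    and step_x: "\<And>x. cubic_model H L x0 y x1 \<le> cubic_model H L x0 y x"
    and step_y: "H x1 y1 \<le> H x1 y"
  shows "H x1 y1 \<le> H x0 y - L y / 12 * \<bar>x1 - x0\<bar> ^ 3"
proof -
  have "H x1 y \<le> H x0 y + cubic_model H L x0 y x1"
    using taylor_upper_bound_lipschitz_second_deriv[OF d1 d2 lip]
    unfolding cubic_model_def by (simp add: algebra_simps)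
  moreover have "cubic_model H L x0 y x1 \<le> - L y / 12 * \<bar>x1 - x0\<bar> ^ 3"
    using cubic_argmin_value_le[OF step_x[unfolded cubic_model_def]] unfolding cubic_model_def .
  ultimately show ?thesis
    using step_y by linarith
qed

lemma cubic_scheme_steps_tendsto_0:
  fixes H :: "real \<Rightarrow> 'b \<Rightarrow> real"
  assumes d1: "\<And>x y. ((\<lambda>u. H u y) has_real_derivative dx H x y) (at x)"
    and d2: "\<And>x y. ((\<lambda>u. dx H u y) has_real_derivative dxx H x y) (at x)"
    and lip: "\<And>x1 x2 y. \<bar>dxx H x1 y - dxx H x2 y\<bar> \<le> L y * \<bar>x1 - x2\<bar>"
    and L_lower: "0 < lm" "\<And>k. lm \<le> L (ys k)"
    and step_x: "\<And>k x. cubic_model H L (xs k) (ys k) (xs (Suc k)) \<le> cubic_model H L (xs k) (ys k) x"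
    and step_y: "\<And>k y. H (xs (Suc k)) (ys (Suc k)) \<le> H (xs (Suc k)) y"
    and bdd: "bdd_below (range (\<lambda>k. H (xs k) (ys k)))"
  shows "(\<lambda>k. xs (Suc k) - xs k) \<longlonglongrightarrow> 0"
proof -
  have "(\<lambda>k. \<bar>xs (Suc k) - xs k\<bar> ^ 3) \<longlonglongrightarrow> 0"
  proof (rule sufficient_decrease_tendsto_0[OF _ _ _ bdd])
    show "H (xs (Suc k)) (ys (Suc k)) \<le> H (xs k) (ys k) - lm / 12 * \<bar>xs (Suc k) - xs k\<bar> ^ 3" for k
    proof -
      have "lm / 12 * \<bar>xs (Suc k) - xs k\<bar> ^ 3 \<le> L (ys k) / 12 * \<bar>xs (Suc k) - xs k\<bar> ^ 3"
        using L_lower(2)[of k] by (intro mult_right_mono divide_right_mono) auto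
      then show ?thesis
        using cubic_scheme_descent[OF d1 d2 lip step_x[of k] step_y[of k]] by linarith
    qed
  qed (use L_lower in auto)
  then have "(\<lambda>k. root 3 (\<bar>xs (Suc k) - xs k\<bar> ^ 3)) \<longlonglongrightarrow> root 3 0"
    by (rule tendsto_real_root)
  then show ?thesis
    by (simp add: real_root_power_cancel tendsto_rabs_zero_iff)
qed

lemma cubic_scheme_limit_dx_eq_0:
  fixes H :: "real \<Rightarrow> 'b::topological_space \<Rightarrow> real"
  assumes cont_dx: "continuous_on UNIV (\<lambda>z. dx H (fst z) (snd z))"
    and cont_dxx: "continuous_on UNIV (\<lambda>z. dxx H (fst z) (snd z))"
    and L_bounds: "\<And>k. 0 \<le> L (ys k) \<and> L (ys k) \<le> lp"
    and step_x: "\<And>k x. cubic_model H L (xs k) (ys k) (xs (Suc k)) \<le> cubic_model H L (xs k) (ys k) x"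
    and steps: "(\<lambda>k. xs (Suc k) - xs k) \<longlonglongrightarrow> 0"
    and r: "strict_mono r" and lim: "(\<lambda>n. (xs (r n), ys (r n))) \<longlonglongrightarrow> (xb, yb)"
  shows "dx H xb yb = 0"
proof -
  define h where "h n = xs (Suc (r n)) - xs (r n)" for n
  have h: "h \<longlonglongrightarrow> 0"
    using LIMSEQ_subseq_LIMSEQ[OF steps r] unfolding h_def[abs_def] by (simp add: o_def)
  have stationary: "dx H (xs (r n)) (ys (r n))
      = - (dxx H (xs (r n)) (ys (r n)) * h n) - L (ys (r n)) / 2 * h n * \<bar>h n\<bar>" for n
    using cubic_argmin_stationary[OF step_x[of "r n", unfolded cubic_model_def]]
    unfolding h_def by linarith
  have "(\<lambda>n. dx H (xs (r n)) (ys (r n))) \<longlonglongrightarrow> dx H xb yb"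
    using continuous_on_tendsto_compose[OF cont_dx lim] by simp
  moreover have "(\<lambda>n. dxx H (xs (r n)) (ys (r n)) * h n) \<longlonglongrightarrow> 0"
    using tendsto_mult[OF continuous_on_tendsto_compose[OF cont_dxx lim] h] by simp
  moreover have "(\<lambda>n. L (ys (r n)) / 2 * h n * \<bar>h n\<bar>) \<longlonglongrightarrow> 0"
  proof (rule Lim_null_comparison)
    show "\<forall>\<^sub>F n in sequentially. norm (L (ys (r n)) / 2 * h n * \<bar>h n\<bar>) \<le> lp / 2 * (h n * h n)"
    proof (intro always_eventually allI)
      fix n
      have "norm (L (ys (r n)) / 2 * h n * \<bar>h n\<bar>) = L (ys (r n)) / 2 * (h n * h n)"
        using L_bounds[of "r n"] by (simp add: abs_mult abs_mult_self_eq)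
      also have "\<dots> \<le> lp / 2 * (h n * h n)"
        using L_bounds[of "r n"] by (intro mult_right_mono divide_right_mono) auto
      finally show "norm (L (ys (r n)) / 2 * h n * \<bar>h n\<bar>) \<le> lp / 2 * (h n * h n)" .
    qed
    show "(\<lambda>n. lp / 2 * (h n * h n)) \<longlonglongrightarrow> 0"
      using tendsto_mult[OF tendsto_const tendsto_mult[OF h h], of "lp / 2"] by simp
  qed
  ultimately have "(\<lambda>n. dx H (xs (r n)) (ys (r n))) \<longlonglongrightarrow> - 0 - 0"
    unfolding stationary by (intro tendsto_diff tendsto_minus)
  then show ?thesis
    using LIMSEQ_unique \<open>(\<lambda>n. dx H (xs (r n)) (ys (r n))) \<longlonglongrightarrow> dx H xb yb\<close> by fastforce
qed

lemma alternating_limit_minimizes_y: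
  fixes H :: "real \<Rightarrow> 'b::topological_space \<Rightarrow> real"
  assumes cont: "continuous_on UNIV (\<lambda>z. H (fst z) (snd z))"
    and step_y: "\<And>k y. H (xs (Suc k)) (ys (Suc k)) \<le> H (xs (Suc k)) y"
    and r: "strict_mono r" and lim: "(\<lambda>n. (xs (r n), ys (r n))) \<longlonglongrightarrow> (xb, yb)"
  shows "H xb yb \<le> H xb y"
proof (rule tendsto_le[OF trivial_limit_sequentially])
  show "(\<lambda>n. H (xs (r n)) y) \<longlonglongrightarrow> H xb y"
    using continuous_on_tendsto_compose[OF cont tendsto_Pair[OF tendsto_fst[OF lim] tendsto_const]]
    by simp
  show "(\<lambda>n. H (xs (r n)) (ys (r n))) \<longlonglongrightarrow> H xb yb"
    using continuous_on_tendsto_compose[OF cont lim] by simp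
  have "H (xs (r n)) (ys (r n)) \<le> H (xs (r n)) y" if "1 \<le> n" for n
  proof -
    have "r n = Suc (r n - 1)"
      using seq_suble[OF r, of n] that by linarith
    then show ?thesis
      using step_y[of "r n - 1" y] by metis
  qed
  then show "\<forall>\<^sub>F n in sequentially. H (xs (r n)) (ys (r n)) \<le> H (xs (r n)) y"
    unfolding eventually_sequentially by blast
qed

theorem theorem1:
  fixes N :: nat and E :: "nat \<Rightarrow> complex ^ 't"
    and L :: "complex ^ 't \<Rightarrow> real"
    and xs :: "nat \<Rightarrow> real" and ys :: "nat \<Rightarrow> complex ^ 't"
  defines "H \<equiv> Hobj N E"
  assumes N_pos: "N \<ge> 1"
    and L_pos: "\<And>y. L y > 0"
    and A1: "bdd_below (range (\<lambda>(x, y). H x y))"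
    and A2_d1: "\<And>x y. ((\<lambda>u. H u y) has_real_derivative dx H x y) (at x)"
    and A2_d2: "\<And>x y. ((\<lambda>u. dx H u y) has_real_derivative dxx H x y) (at x)"
    and A2_cont: "\<And>y. continuous_on UNIV (\<lambda>u. dxx H u y)"
    and A2_lip: "\<And>x1 x2 y. \<bar>dxx H x1 y - dxx H x2 y\<bar> \<le> L y * \<bar>x1 - x2\<bar>"
    and A3: "\<exists>\<nu>>0. \<forall>x. convex_on UNIV (\<lambda>y. H x y - \<nu> / 2 * (norm y)\<^sup>2)"
    and A4: "\<exists>lm lp. 0 < lm \<and> lm \<le> lp \<and> (\<forall>k. lm \<le> L (ys k) \<and> L (ys k) \<le> lp)"
    and step_x: "\<And>k x. cubic_model H L (xs k) (ys k) (xs (Suc k))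
                          \<le> cubic_model H L (xs k) (ys k) x"
    and step_y: "\<And>k y. H (xs (Suc k)) (ys (Suc k)) \<le> H (xs (Suc k)) y"
    and bdd: "bounded (range (\<lambda>k. (xs k, ys k)))"
  shows "omega_limit (\<lambda>k. (xs k, ys k)) \<noteq> {}
         \<and> omega_limit (\<lambda>k. (xs k, ys k)) \<subseteq> crit H
         \<and> (\<lambda>k. infdist (xs k, ys k) (omega_limit (\<lambda>k. (xs k, ys k)))) \<longlonglongrightarrow> 0"
proof -
  obtain lm lp where lm: "0 < lm" and L_bounds: "\<And>k. lm \<le> L (ys k) \<and> L (ys k) \<le> lp"
    using A4 by blast
  have L_lower: "lm \<le> L (ys k)" and L_range: "0 \<le> L (ys k) \<and> L (ys k) \<le> lp" for k
    using lm L_bounds[of k] by auto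
  have "bdd_below (range (\<lambda>k. H (xs k) (ys k)))"
    by (rule bdd_below_mono[OF A1]) auto
  then have steps: "(\<lambda>k. xs (Suc k) - xs k) \<longlonglongrightarrow> 0"
    by (rule cubic_scheme_steps_tendsto_0[where H = H and L = L and xs = xs and ys = ys,
          OF A2_d1 A2_d2 A2_lip lm L_lower step_x step_y])
  have "(xb, yb) \<in> crit H" if limit_point: "(xb, yb) \<in> omega_limit (\<lambda>k. (xs k, ys k))" for xb yb
  proof -
    obtain r where r: "strict_mono r" and lim: "(\<lambda>n. (xs (r n), ys (r n))) \<longlonglongrightarrow> (xb, yb)"
      using limit_point unfolding omega_limit_def comp_def by blast
    have "dx H xb yb = 0"
      unfolding H_def
      by (rule cubic_scheme_limit_dx_eq_0[OF continuous_on_dx_Hobj continuous_on_dxx_Hobj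
            L_range step_x[unfolded H_def] steps r lim])
    moreover have "wirtinger_grad (H xb) yb = 0"
      unfolding H_def
      by (intro wirtinger_grad_eq_0_at_minimum Hobj_directionally_differentiable
          alternating_limit_minimizes_y[OF continuous_on_Hobj step_y[unfolded H_def] r lim])
    ultimately show ?thesis
      by (simp add: crit_def)
  qed
  then show ?thesis
    using omega_limit_nonempty[OF bdd] infdist_omega_limit_tendsto_0[OF bdd] by auto
qed

end
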